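(* Let $\mathcal{H}$ be a complex Hilbert space and $B\in\mathcal{B}(\mathcal{H})$. Then for every $0\le\alpha\le1$, $$w^4(B)\le\frac{1+\alpha}{8}\big\||B|^4+|B^*|^4\big\|+\frac{1-\alpha}{4}w^2(B^2)+\frac14\big\||B|^2+|B^*|^2\big\|\,w(B^2).$$
   Context: $\mathcal{B}(\mathcal{H})$ is the algebra of bounded linear operators on $\mathcal{H}$ with operator norm $\|\cdot\|$. For $A\in\mathcal{B}(\mathcal{H})$, $A^*$ is the adjoint, $|A|=(A^*A)^{1/2}$, $|A^*|=(AA^* )^{1/2}$, and $w(A)=\sup_{\|x\|=1}|\langle Ax,x\rangle|$ is the numerical radius. *)

theory Defs
  imports "HOL-Analysis.Analysis"
begin

class complex_hilbert = banach +
  fixes scaleC :: "complex \<Rightarrow> 'a \<Rightarrow> 'a"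
    and cinner :: "'a \<Rightarrow> 'a \<Rightarrow> complex"
  assumes scaleC_add_right: "scaleC a (x + y) = scaleC a x + scaleC a y"
    and scaleC_add_left: "scaleC (a + b) x = scaleC a x + scaleC b x"
    and scaleC_scaleC: "scaleC a (scaleC b x) = scaleC (a * b) x"
    and scaleC_of_real: "scaleC (of_real r) x = scaleR r x"
    and cinner_add_left: "cinner (x + y) z = cinner x z + cinner y z"
    and cinner_scaleC_left: "cinner (scaleC a x) y = a * cinner x y"
    and cinner_commute: "cinner x y = cnj (cinner y x)"
    and cinner_pos: "0 \<le> Re (cinner x x)"
    and cinner_eq_zero_iff: "cinner x x = 0 \<longleftrightarrow> x = 0"
    and norm_eq_sqrt_cinner: "norm x = sqrt (Re (cinner x x))"

definition bounded_op :: "('a::complex_hilbert \<Rightarrow> 'a) \<Rightarrow> bool" where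
  "bounded_op A \<longleftrightarrow> (\<forall>x y. A (x + y) = A x + A y) \<and> (\<forall>c x. A (scaleC c x) = scaleC c (A x))
     \<and> (\<exists>K. \<forall>x. norm (A x) \<le> norm x * K)"

definition is_adjoint :: "('a::complex_hilbert \<Rightarrow> 'a) \<Rightarrow> ('a \<Rightarrow> 'a) \<Rightarrow> bool" where
  "is_adjoint A As \<longleftrightarrow> (\<forall>x y. cinner (A x) y = cinner x (As y))"

text \<open>Numerical radius (the 0 only matters for the trivial space, where it gives w = 0).\<close>
definition numrad :: "('a::complex_hilbert \<Rightarrow> 'a) \<Rightarrow> real" where
  "numrad A = Sup (insert 0 {cmod (cinner (A x) x) | x. norm x = 1})"

end

theory Submission
  imports Defs
begin

(* For a unit vector x put p = \<parallel>Bx\<parallel>, q = \<parallel>B\<^sup>*x\<parallel> and r = |\<langle>B\<^sup>2x, x\<rangle>| \<le> pq.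
  Buzano's inequality with e = x, a = Bx, b = B\<^sup>*x gives 2|\<langle>Bx, x\<rangle>|\<^sup>2 \<le> pq + r; squaring,
  |\<langle>Bx, x\<rangle>|\<^sup>4 \<le> ((pq)\<^sup>2 + 2pqr + r\<^sup>2)/4. Now 2pq \<le> p\<^sup>2 + q\<^sup>2 = \<langle>(|B|\<^sup>2 + |B\<^sup>*|\<^sup>2)x, x\<rangle>,
  2(pq)\<^sup>2 \<le> p\<^sup>4 + q\<^sup>4 \<le> \<langle>(|B|\<^sup>4 + |B\<^sup>*|\<^sup>4)x, x\<rangle> (because p\<^sup>2 = \<langle>|B|\<^sup>2x, x\<rangle> \<le> \<parallel>|B|\<^sup>2x\<parallel>), and r\<^sup>2 is split as
  the convex combination \<alpha> r\<^sup>2 + (1 - \<alpha>) r\<^sup>2 \<le> \<alpha> (pq)\<^sup>2 + (1 - \<alpha>) w\<^sup>2(B\<^sup>2). *)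

lemma cinner_add_right: "cinner (x::'a::complex_hilbert) (y + z) = cinner x y + cinner x z"
  by (metis cinner_commute cinner_add_left complex_cnj_add)

lemma cinner_scaleC_right: "cinner (x::'a::complex_hilbert) (scaleC a y) = cnj a * cinner x y"
  by (metis cinner_commute cinner_scaleC_left complex_cnj_mult)

lemma cinner_zero_left [simp]: "cinner (0::'a::complex_hilbert) y = 0"
  using cinner_add_left[of "0::'a" 0 y] by simp

lemma cinner_zero_right [simp]: "cinner (y::'a::complex_hilbert) 0 = 0"
  by (metis cinner_commute cinner_zero_left complex_cnj_zero)

lemma cinner_diff_left: "cinner (x - z::'a::complex_hilbert) y = cinner x y - cinner z y"
  using cinner_add_left[of "x - z" z y] by (simp add: algebra_simps)

lemma cinner_diff_right: "cinner (y::'a::complex_hilbert) (x - z) = cinner y x - cinner y z"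
  by (metis cinner_commute cinner_diff_left complex_cnj_diff)

lemma cinner_self_eq_norm_sq: "cinner (x::'a::complex_hilbert) x = of_real ((norm x)\<^sup>2)"
proof -
  have "Im (cinner x x) = 0"
    using arg_cong[where f = Im, OF cinner_commute[of x x]] by simp
  moreover have "Re (cinner x x) = (norm x)\<^sup>2"
    using norm_eq_sqrt_cinner[of x] cinner_pos[of x] by simp
  ultimately show ?thesis by (simp add: complex_eq_iff)
qed

lemma cinner_ext:
  fixes u v :: "'a::complex_hilbert"
  assumes "\<And>z. cinner z u = cinner z v"
  shows "u = v"
proof -
  have "cinner (u - v) (u - v) = 0" using assms by (simp add: cinner_diff_right)
  then show ?thesis using cinner_eq_zero_iff[of "u - v"] by simp
qed

lemma Cauchy_Schwarz_cinner: "cmod (cinner (x::'a::complex_hilbert) y) \<le> norm x * norm y"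
proof (cases "y = 0")
  case False
  then have ny: "norm y > 0" by simp
  have yy: "cinner y y \<noteq> 0" using False cinner_eq_zero_iff by blast
  define t where "t = cinner x y / cinner y y"
  define z where "z = x - scaleC t y"
  have zy: "cinner z y = 0"
    unfolding z_def t_def using yy by (simp add: cinner_diff_left cinner_scaleC_left)
  have yz: "cinner y z = 0" using zy cinner_commute[of y z] by simp
  \<comment> \<open>Pythagoras for the orthogonal decomposition x = z + t y\<close>
  have "cinner x x = cinner z z + t * cnj t * cinner y y"
    unfolding z_def[THEN eq_diff_eq[THEN iffD1], symmetric]
    by (simp add: cinner_add_left cinner_add_right cinner_scaleC_left cinner_scaleC_right zy yz)
  then have "Re (cinner x x) = Re (cinner z z + t * cnj t * cinner y y)" by simp
  then have "(norm x)\<^sup>2 = (norm z)\<^sup>2 + (cmod t)\<^sup>2 * (norm y)\<^sup>2"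
    using cmod_power2[of t] by (simp add: cinner_self_eq_norm_sq complex_mult_cnj power2_eq_square)
  then have "(cmod t)\<^sup>2 * (norm y)\<^sup>2 \<le> (norm x)\<^sup>2" by simp
  moreover have "cmod t = cmod (cinner x y) / (norm y)\<^sup>2"
    unfolding t_def by (simp add: norm_divide cinner_self_eq_norm_sq norm_power)
  ultimately have "(cmod (cinner x y))\<^sup>2 / (norm y)\<^sup>2 \<le> (norm x)\<^sup>2"
    using ny by (simp add: power_divide power2_eq_square)
  then have "(cmod (cinner x y))\<^sup>2 \<le> (norm x * norm y)\<^sup>2"
    using ny by (simp add: divide_le_eq power_mult_distrib)
  then show ?thesis by (rule power2_le_imp_le) simp
qed simp

text \<open>Buzano's inequality: b is reflected to u = 2\<langle>b, e\<rangle>e - b, which has the same norm,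
  and 2\<langle>a, e\<rangle>\<langle>e, b\<rangle> = \<langle>a, u\<rangle> + \<langle>a, b\<rangle>.\<close>

lemma Buzano_ineq:
  fixes a b e :: "'a::complex_hilbert"
  assumes "norm e = 1"
  shows "2 * cmod (cinner a e * cinner e b) \<le> norm a * norm b + cmod (cinner a b)"
proof -
  define \<beta> where "\<beta> = cinner b e"
  define u where "u = scaleC (2 * \<beta>) e - b"
  have ee: "cinner e e = 1" using assms by (simp add: cinner_self_eq_norm_sq)
  have eb: "cinner e b = cnj \<beta>" unfolding \<beta>_def by (rule cinner_commute)
  have key: "2 * (cinner a e * cinner e b) = cinner a u + cinner a b"
    unfolding u_def eb by (simp add: cinner_diff_right cinner_scaleC_right algebra_simps)
  have "cinner u u = cinner b b"
    unfolding u_def using ee eb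
    by (simp add: cinner_diff_right cinner_diff_left cinner_scaleC_right cinner_scaleC_left
        \<beta>_def algebra_simps)
  then have nu: "norm u = norm b" by (simp add: norm_eq_sqrt_cinner)
  have "2 * cmod (cinner a e * cinner e b) = cmod (cinner a u + cinner a b)"
    using key by (metis norm_mult norm_numeral)
  also have "\<dots> \<le> cmod (cinner a u) + cmod (cinner a b)" by (rule norm_triangle_ineq)
  also have "\<dots> \<le> norm a * norm b + cmod (cinner a b)"
    using Cauchy_Schwarz_cinner[of a u] nu by simp
  finally show ?thesis .
qed

lemma bounded_op_linear:
  assumes "bounded_op (A::'a::complex_hilbert \<Rightarrow> 'a)"
  shows "bounded_linear A"
proof -
  obtain K where K: "\<And>x. norm (A x) \<le> norm x * K"
    using assms unfolding bounded_op_def by blast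
  show ?thesis
  proof (rule bounded_linear_intro[of _ K])
    show "A (x + y) = A x + A y" for x y using assms unfolding bounded_op_def by blast
    show "A (scaleR r x) = scaleR r (A x)" for r x
      using assms unfolding bounded_op_def by (metis scaleC_of_real)
  qed (rule K)
qed

lemma is_adjoint_sym: "is_adjoint A As \<Longrightarrow> is_adjoint As A"
  unfolding is_adjoint_def by (metis cinner_commute)

lemma is_adjoint_comp:
  "is_adjoint A As \<Longrightarrow> is_adjoint C Cs \<Longrightarrow> is_adjoint (A \<circ> C) (Cs \<circ> As)"
  unfolding is_adjoint_def by simp

lemma bounded_op_adjoint:
  assumes B: "bounded_op (B::'a::complex_hilbert \<Rightarrow> 'a)" and adj: "is_adjoint B Bs"
  shows "bounded_op Bs"
proof -
  obtain K where K: "\<And>x. norm (B x) \<le> norm x * K" using B unfolding bounded_op_def by blast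
  have "Bs (x + y) = Bs x + Bs y" for x y
    by (rule cinner_ext) (metis adj is_adjoint_def cinner_add_right)
  moreover have "Bs (scaleC c x) = scaleC c (Bs x)" for c x
    by (rule cinner_ext) (metis adj is_adjoint_def cinner_scaleC_right)
  moreover have "norm (Bs y) \<le> norm y * K" for y
  proof -
    have "(norm (Bs y))\<^sup>2 = Re (cinner (B (Bs y)) y)"
      using adj unfolding is_adjoint_def by (simp add: cinner_self_eq_norm_sq)
    also have "\<dots> \<le> norm (B (Bs y)) * norm y"
      using complex_Re_le_cmod Cauchy_Schwarz_cinner order_trans by blast
    also have "\<dots> \<le> norm (Bs y) * (norm y * K)"
      using mult_right_mono[OF K[of "Bs y"] norm_ge_zero[of y]] by (simp add: ac_simps)
    finally have "norm (Bs y) * norm (Bs y) \<le> norm (Bs y) * (norm y * K)"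
      by (simp add: power2_eq_square)
    moreover have "0 \<le> norm y * K" using K[of y] norm_ge_zero order_trans by blast
    ultimately show ?thesis by (cases "Bs y = 0") (simp_all add: mult_le_cancel_left)
  qed
  ultimately show ?thesis unfolding bounded_op_def by blast
qed

lemma cinner_adjoint_comp_self:
  "is_adjoint A As \<Longrightarrow> cinner (As (A x)) x = of_real ((norm (A x))\<^sup>2)"
  using is_adjoint_sym unfolding is_adjoint_def by (metis cinner_self_eq_norm_sq)

lemma norm_sq_le_norm_adjoint_comp:
  assumes "is_adjoint A As" "norm (x::'a::complex_hilbert) = 1"
  shows "(norm (A x))\<^sup>2 \<le> norm (As (A x))"
  using Cauchy_Schwarz_cinner[of "As (A x)" x] assms
  by (simp add: cinner_adjoint_comp_self[OF assms(1)] norm_power)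

lemma Re_cinner_le_onorm:
  assumes "bounded_linear T" "norm (x::'a::complex_hilbert) = 1"
  shows "Re (cinner (T x) x) \<le> onorm T"
proof -
  have "Re (cinner (T x) x) \<le> norm (T x) * norm x"
    using complex_Re_le_cmod Cauchy_Schwarz_cinner order_trans by blast
  also have "\<dots> \<le> onorm T" using onorm[OF assms(1), of x] assms(2) by simp
  finally show ?thesis .
qed

lemma numrad_bdd_above:
  assumes "bounded_linear (A::'a::complex_hilbert \<Rightarrow> 'a)"
  shows "bdd_above (insert 0 {cmod (cinner (A x) x) | x. norm x = 1})"
proof (rule bdd_aboveI[of _ "onorm A"])
  fix y assume "y \<in> insert 0 {cmod (cinner (A x) x) | x. norm x = 1}"
  then consider "y = 0" | x where "norm x = 1" "y = cmod (cinner (A x) x)" by blast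
  then show "y \<le> onorm A"
  proof cases
    case 2
    then have "y \<le> norm (A x) * norm x" using Cauchy_Schwarz_cinner[of "A x" x] by simp
    then show ?thesis using onorm[OF assms, of x] 2 by simp
  qed (simp add: onorm_pos_le[OF assms])
qed

lemma cmod_cinner_le_numrad:
  assumes "bounded_linear A" "norm (x::'a::complex_hilbert) = 1"
  shows "cmod (cinner (A x) x) \<le> numrad A"
  unfolding numrad_def using assms(2) by (intro cSup_upper numrad_bdd_above[OF assms(1)]) blast

lemma numrad_nonneg: "bounded_linear (A::'a::complex_hilbert \<Rightarrow> 'a) \<Longrightarrow> 0 \<le> numrad A"
  unfolding numrad_def by (intro cSup_upper numrad_bdd_above) simp_all

lemma numrad_power_le:
  fixes A :: "'a::complex_hilbert \<Rightarrow> 'a"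
  assumes "0 < n" "0 \<le> c" "\<And>x. norm x = 1 \<Longrightarrow> cmod (cinner (A x) x) ^ n \<le> c"
  shows "numrad A ^ n \<le> c"
proof -
  have bound: "y \<le> root n c" if "y \<in> insert 0 {cmod (cinner (A x) x) | x. norm x = 1}" for y
  proof -
    from that consider "y = 0" | x where "norm x = 1" "y = cmod (cinner (A x) x)" by blast
    then show ?thesis
    proof cases
      case 2
      then have "y = root n (y ^ n)" using assms(1) by (simp add: real_root_power_cancel)
      also have "\<dots> \<le> root n c" using 2 assms by (simp add: real_root_le_mono)
      finally show ?thesis .
    qed (simp add: real_root_ge_zero assms(2))
  qed
  then have "numrad A \<le> root n c" unfolding numrad_def by (intro cSup_least) auto
  moreover have "0 \<le> numrad A"
    unfolding numrad_def by (intro cSup_upper bdd_aboveI[OF bound]) auto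
  ultimately have "numrad A ^ n \<le> root n c ^ n" by (rule power_mono)
  then show ?thesis using assms(1,2) by simp
qed

lemma buzano_quartic_estimate:
  fixes p q r s w N2 N4 \<alpha> :: real
  assumes "0 \<le> p" "0 \<le> q" "0 \<le> r" "0 \<le> \<alpha>" "\<alpha> \<le> 1"
    and "2 * s\<^sup>2 \<le> p * q + r" "r \<le> p * q" "r \<le> w"
    and "p ^ 4 + q ^ 4 \<le> N4" "p\<^sup>2 + q\<^sup>2 \<le> N2"
  shows "s ^ 4 \<le> (1 + \<alpha>) / 8 * N4 + (1 - \<alpha>) / 4 * w\<^sup>2 + 1 / 4 * N2 * w"
proof -
  have "2 * (p * q) \<le> p\<^sup>2 + q\<^sup>2"
    using sum_squares_ge_zero[of "p - q" 0] by (simp add: power2_eq_square algebra_simps)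
  then have mixed: "2 * (p * q) * r \<le> N2 * w"
    by (intro mult_mono) (use assms in auto)
  have "2 * (p * q)\<^sup>2 \<le> p ^ 4 + q ^ 4"
    using sum_squares_ge_zero[of "p\<^sup>2 - q\<^sup>2" 0] by (simp add: power2_eq_square algebra_simps power4_eq_xxxx)
  then have "(1 + \<alpha>) / 8 * (2 * (p * q)\<^sup>2) \<le> (1 + \<alpha>) / 8 * N4"
    using assms(4,9) by (intro mult_left_mono) simp_all
  then have quartic: "(1 + \<alpha>) / 4 * (p * q)\<^sup>2 \<le> (1 + \<alpha>) / 8 * N4" by simp
  have "r\<^sup>2 \<le> (p * q)\<^sup>2" "r\<^sup>2 \<le> w\<^sup>2" by (rule power_mono; use assms in auto)+
  then have "\<alpha> * r\<^sup>2 + (1 - \<alpha>) * r\<^sup>2 \<le> \<alpha> * (p * q)\<^sup>2 + (1 - \<alpha>) * w\<^sup>2"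
    using assms(4,5) by (intro add_mono mult_left_mono) simp_all
  then have convex: "r\<^sup>2 \<le> \<alpha> * (p * q)\<^sup>2 + (1 - \<alpha>) * w\<^sup>2" by (simp add: algebra_simps)
  have "(s\<^sup>2)\<^sup>2 \<le> ((p * q + r) / 2)\<^sup>2"
    by (rule power_mono) (use assms in auto)
  then have "s ^ 4 \<le> ((p * q)\<^sup>2 + 2 * (p * q) * r + r\<^sup>2) / 4"
    by (simp add: power2_eq_square algebra_simps power4_eq_xxxx)
  also have "\<dots> \<le> ((p * q)\<^sup>2 + N2 * w + (\<alpha> * (p * q)\<^sup>2 + (1 - \<alpha>) * w\<^sup>2)) / 4"
    using mixed convex by simp
  also have "\<dots> = (1 + \<alpha>) / 4 * (p * q)\<^sup>2 + (1 - \<alpha>) / 4 * w\<^sup>2 + 1 / 4 * N2 * w"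
    by (simp add: field_simps)
  also have "\<dots> \<le> (1 + \<alpha>) / 8 * N4 + (1 - \<alpha>) / 4 * w\<^sup>2 + 1 / 4 * N2 * w"
    using quartic by simp
  finally show ?thesis .
qed

lemma cmod_cinner_fourth_power_le:
  fixes B Bs :: "'a::complex_hilbert \<Rightarrow> 'a"
  assumes lB: "bounded_linear B" and adj: "is_adjoint B Bs" and lBs: "bounded_linear Bs"
    and "0 \<le> \<alpha>" "\<alpha> \<le> 1" and x: "norm x = 1"
  shows "cmod (cinner (B x) x) ^ 4 \<le>
      (1 + \<alpha>) / 8 * onorm (\<lambda>x. Bs (B (Bs (B x))) + B (Bs (B (Bs x))))
    + (1 - \<alpha>) / 4 * numrad (B \<circ> B) ^ 2
    + 1 / 4 * onorm (\<lambda>x. Bs (B x) + B (Bs x)) * numrad (B \<circ> B)"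
proof (rule buzano_quartic_estimate)
  have adj': "is_adjoint Bs B" using adj by (rule is_adjoint_sym)
  have swap: "cinner (B y) z = cinner y (Bs z)" for y z using adj unfolding is_adjoint_def by blast
  show "2 * (cmod (cinner (B x) x))\<^sup>2 \<le> norm (B x) * norm (Bs x) + cmod (cinner (B (B x)) x)"
    using Buzano_ineq[OF x, of "B x" "Bs x"] by (simp add: swap norm_mult power2_eq_square)
  show "cmod (cinner (B (B x)) x) \<le> norm (B x) * norm (Bs x)"
    using Cauchy_Schwarz_cinner[of "B x" "Bs x"] by (simp add: swap)
  show "cmod (cinner (B (B x)) x) \<le> numrad (B \<circ> B)"
    using cmod_cinner_le_numrad[OF bounded_linear_compose[OF lB lB] x] by (simp add: comp_def)
  show "(norm (B x))\<^sup>2 + (norm (Bs x))\<^sup>2 \<le> onorm (\<lambda>x. Bs (B x) + B (Bs x))"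
    using Re_cinner_le_onorm[OF bounded_linear_add[OF bounded_linear_compose[OF lBs lB]
          bounded_linear_compose[OF lB lBs]] x]
    by (simp add: cinner_add_left cinner_adjoint_comp_self[OF adj] cinner_adjoint_comp_self[OF adj'])
  have "Re (cinner (Bs (B (Bs (B x))) + B (Bs (B (Bs x)))) x)
      = (norm (Bs (B x)))\<^sup>2 + (norm (B (Bs x)))\<^sup>2"
    using cinner_adjoint_comp_self[OF is_adjoint_comp[OF adj' adj], of x]
      cinner_adjoint_comp_self[OF is_adjoint_comp[OF adj adj'], of x]
    by (simp add: cinner_add_left del: of_real_power)
  moreover have "bounded_linear (\<lambda>x. Bs (B (Bs (B x))) + B (Bs (B (Bs x))))"
    by (intro bounded_linear_add bounded_linear_compose[OF lBs] bounded_linear_compose[OF lB] lB lBs)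
  ultimately have "(norm (Bs (B x)))\<^sup>2 + (norm (B (Bs x)))\<^sup>2
      \<le> onorm (\<lambda>x. Bs (B (Bs (B x))) + B (Bs (B (Bs x))))"
    using Re_cinner_le_onorm[OF _ x] by fastforce
  moreover have "(norm (B x)) ^ 4 \<le> (norm (Bs (B x)))\<^sup>2" "(norm (Bs x)) ^ 4 \<le> (norm (B (Bs x)))\<^sup>2"
    using power_mono[OF norm_sq_le_norm_adjoint_comp[OF adj x], of 2]
      power_mono[OF norm_sq_le_norm_adjoint_comp[OF adj' x], of 2]
    by (simp_all add: power_mult[symmetric])
  ultimately show "norm (B x) ^ 4 + norm (Bs x) ^ 4
      \<le> onorm (\<lambda>x. Bs (B (Bs (B x))) + B (Bs (B (Bs x))))" by linarith
qed (use assms in simp_all)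

theorem mainTheorem11:
  fixes B Bs :: "'a::complex_hilbert \<Rightarrow> 'a" and \<alpha> :: real
  assumes "bounded_op B"
    and "is_adjoint B Bs"
    and "0 \<le> \<alpha>" and "\<alpha> \<le> 1"
  shows "numrad B ^ 4 \<le>
      (1 + \<alpha>) / 8 * onorm (\<lambda>x. Bs (B (Bs (B x))) + B (Bs (B (Bs x))))
    + (1 - \<alpha>) / 4 * numrad (B \<circ> B) ^ 2
    + 1 / 4 * onorm (\<lambda>x. Bs (B x) + B (Bs x)) * numrad (B \<circ> B)"
    (is "_ \<le> ?R")
proof (rule numrad_power_le)
  have lB: "bounded_linear B" by (rule bounded_op_linear[OF assms(1)])
  have lBs: "bounded_linear Bs" by (rule bounded_op_linear[OF bounded_op_adjoint[OF assms(1,2)]])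
  show "cmod (cinner (B x) x) ^ 4 \<le> ?R" if "norm x = 1" for x
    using cmod_cinner_fourth_power_le[OF lB assms(2) lBs assms(3,4) that] .
  have "bounded_linear (\<lambda>x. Bs (B (Bs (B x))) + B (Bs (B (Bs x))))"
    by (intro bounded_linear_add bounded_linear_compose[OF lBs] bounded_linear_compose[OF lB] lB lBs)
  moreover have "bounded_linear (\<lambda>x. Bs (B x) + B (Bs x))"
    by (intro bounded_linear_add bounded_linear_compose[OF lBs lB] bounded_linear_compose[OF lB lBs])
  moreover have "bounded_linear (B \<circ> B)"
    unfolding comp_def by (rule bounded_linear_compose[OF lB lB])
  ultimately have "0 \<le> onorm (\<lambda>x. Bs (B (Bs (B x))) + B (Bs (B (Bs x))))"
    "0 \<le> onorm (\<lambda>x. Bs (B x) + B (Bs x))" "0 \<le> numrad (B \<circ> B)"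
    by (simp_all add: onorm_pos_le numrad_nonneg)
  then show "0 \<le> ?R" using assms(3,4) by simp
qed simp

end
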